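(* Fix $d\ge1$, $N\ge1$, $\alpha\ge2$, powers $P_s,P_r>0$, gains $\xi_{u,v}>0$, and positions $\mathbf{s},\mathbf{1},\dots,\mathbf{N}\in\mathbb{R}^d$ of the source and destinations with $\mathbf{s}\neq\mathbf{j}$ for all $j$. For a relay position $\mathbf{r}\in\mathbb{R}^d$ let $\mathsf{SNR}_{u,v}=\xi_{u,v}P_u/\|\mathbf{u}-\mathbf{v}\|^{\alpha}$ for $(u,v)\in\{(s,r),(s,j),(r,j)\}$ (an SNR being $+\infty$ when the corresponding distance is $0$), and for $\rho\in[0,1]$, $j=1,\dots,N$, define $$f_j(\rho,\mathbf{r})=\mathsf{SNR}_{s,j}+\mathsf{SNR}_{r,j}+2\rho\sqrt{\mathsf{SNR}_{s,j}\mathsf{SNR}_{r,j}},\qquad g_j(\rho,\mathbf{r})=(1-\rho^2)(\mathsf{SNR}_{s,j}+\mathsf{SNR}_{s,r}).$$ Then for every fixed $\rho\in[0,1]$, $f_j(\rho,\cdot)$ and $g_j(\rho,\cdot)$ are quasi-concave in $\mathbf{r}\in\mathbb{R}^d$. Furthermore, $(t,\mathbf{r})\mapsto f_j(\sqrt t,\mathbf{r})$ is quasi-concave on $[0,1]\times\mathbb{R}^d$ (i.e., $f_j$ is quasi-concave in $(\rho^2,\mathbf{r})$).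
   Context: Setting: real AWGN multicast relay channel with source $s$, relay $r$ at position $\mathbf{r}$, destinations $1,\dots,N$, path-loss exponent $\alpha$ and channel gain $a_{u,v}=\sqrt{\xi_{u,v}}/\|\mathbf{u}-\mathbf{v}\|^{\alpha/2}$, so $\mathsf{SNR}_{u,v}=a_{u,v}^2P_u$; $\rho$ is the source–relay input correlation coefficient. A function $F$ (possibly taking value $+\infty$) on a convex set is quasi-concave if $F(\lambda x_1+(1-\lambda)x_2)\ge\min(F(x_1),F(x_2))$ for all $x_1,x_2$ and $\lambda\in[0,1]$. *)

theory Defs
  imports "HOL-Analysis.Analysis" "HOL-Library.Extended_Real"
begin

definition quasiconcave_on :: "'a::real_vector set \<Rightarrow> ('a \<Rightarrow> ereal) \<Rightarrow> bool" where
  "quasiconcave_on S F \<longleftrightarrow>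
     (\<forall>x1\<in>S. \<forall>x2\<in>S. \<forall>l\<in>{0..1::real}.
        F (l *\<^sub>R x1 + (1 - l) *\<^sub>R x2) \<ge> min (F x1) (F x2))"

definition snr :: "real \<Rightarrow> real \<Rightarrow> real \<Rightarrow> 'a::euclidean_space \<Rightarrow> 'a \<Rightarrow> ereal" where
  "snr alpha xi P u v = (if u = v then \<infinity> else ereal (xi * P / (norm (u - v) powr alpha)))"

definition esqrt :: "ereal \<Rightarrow> ereal" where
  "esqrt x = (if x = \<infinity> then \<infinity> else ereal (sqrt (real_of_ereal x)))"

definition fj :: "real \<Rightarrow> real \<Rightarrow> real \<Rightarrow> real \<Rightarrow> real \<Rightarrow> 'a::euclidean_space \<Rightarrow> 'a \<Rightarrow> real \<Rightarrow> 'a \<Rightarrow> ereal" where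
  "fj alpha Ps Pr xisj xirj s dj rho r =
     snr alpha xisj Ps s dj + snr alpha xirj Pr r dj
     + ereal (2 * rho) * esqrt (snr alpha xisj Ps s dj * snr alpha xirj Pr r dj)"

definition gj :: "real \<Rightarrow> real \<Rightarrow> real \<Rightarrow> real \<Rightarrow> 'a::euclidean_space \<Rightarrow> 'a \<Rightarrow> real \<Rightarrow> 'a \<Rightarrow> ereal" where
  "gj alpha Ps xisj xisr s dj rho r =
     ereal (1 - rho\<^sup>2) * (snr alpha xisj Ps s dj + snr alpha xisr Ps s r)"

end

theory Submission
  imports Defs
begin

text \<open>Write \<open>f\<^sub>j\<close> as a function of \<open>t = \<rho>\<^sup>2\<close> and the relay--destination distance
  \<open>u = \<parallel>r - d\<^sub>j\<parallel>\<close>. For a level \<open>c\<close> above \<open>SNR\<^sub>s\<^sub>,\<^sub>j\<close>, the inequality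
  \<open>f\<^sub>j \<ge> c\<close> is a quadratic condition in \<open>u\<^bsup>-\<alpha>/2\<^esup>\<close> and amounts to \<open>u \<le> R\<^sub>c(t)\<close>, where
  \<open>R\<^sub>c\<close> is a sum of square roots of affine functions of \<open>t\<close> raised to the power \<open>2/\<alpha>\<close>.
  Because \<open>\<alpha> \<ge> 2\<close>, \<open>R\<^sub>c\<close> is concave; since \<open>u\<close> is a convex function of the relay position
  and \<open>t\<close> enters affinely, every superlevel set of \<open>f\<^sub>j\<close> is convex. For \<open>0 \<le> \<rho> < 1\<close>,
  \<open>g\<^sub>j\<close> is the case \<open>t = 0\<close> of the same function, scaled by \<open>1 - \<rho>\<^sup>2\<close> and with the
  source--relay distance in place of \<open>u\<close>; for \<open>\<rho> = 1\<close> it is identically zero.\<close>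

lemma concave_on_sqrt: "concave_on {0..} sqrt"
  unfolding concave_on_iff
proof (intro conjI ballI allI impI)
  fix x y u v :: real
  assume x: "x \<in> {0..}" and y: "y \<in> {0..}" and u: "0 \<le> u" and v: "0 \<le> v" and uv: "u + v = 1"
  show "u * sqrt x + v * sqrt y \<le> sqrt (u *\<^sub>R x + v *\<^sub>R y)"
  proof (rule real_le_rsqrt)
    have "0 \<le> (sqrt x - sqrt y)\<^sup>2" by simp
    then have "2 * sqrt x * sqrt y \<le> x + y"
      using x y by (simp add: power2_diff)
    then have "u * v * (2 * sqrt x * sqrt y) \<le> u * v * (x + y)"
      using u v by (intro mult_left_mono) auto
    moreover have "u * x + v * y = (u + v) * (u * x + v * y)" using uv by simp
    ultimately show "(u * sqrt x + v * sqrt y)\<^sup>2 \<le> u *\<^sub>R x + v *\<^sub>R y"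
      using x y by (simp add: power2_eq_square algebra_simps)
  qed
qed simp

lemma concave_on_powr:
  assumes "0 \<le> p" "p \<le> 1"
  shows "concave_on {0<..} (\<lambda>x::real. x powr p)"
  using assms
  by (intro f''_le0_imp_concave[where f' = "\<lambda>x. p * x powr (p - 1)"
        and f'' = "\<lambda>x. p * ((p - 1) * x powr (p - 1 - 1))"] derivative_eq_intros)
     (auto simp: mult_le_0_iff)

lemma concave_on_comp_mono:
  assumes f: "concave_on S f" and g: "concave_on T g" and mono: "mono_on T g" and fST: "f ` S \<subseteq> T"
  shows "concave_on S (\<lambda>x. g (f x))"
  unfolding concave_on_iff
proof (intro conjI ballI allI impI)
  show "convex S" using f by (rule concave_on_imp_convex)
  fix x y assume x: "x \<in> S" and y: "y \<in> S"
  fix u v :: real assume u: "0 \<le> u" and v: "0 \<le> v" and uv: "u + v = 1"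
  have "u * f x + v * f y \<in> T"
    using convexD[OF concave_on_imp_convex[OF g], of "f x" "f y" u v] fST x y u v uv by auto
  moreover have "f (u *\<^sub>R x + v *\<^sub>R y) \<in> T"
    using convexD[OF concave_on_imp_convex[OF f] x y u v uv] fST by auto
  moreover have "u * f x + v * f y \<le> f (u *\<^sub>R x + v *\<^sub>R y)"
    using f x y u v uv by (simp add: concave_on_iff)
  ultimately have "g (u * f x + v * f y) \<le> g (f (u *\<^sub>R x + v *\<^sub>R y))"
    by (rule mono_onD[OF mono])
  moreover have "u * g (f x) + v * g (f y) \<le> g (u * f x + v * f y)"
    using g fST x y u v uv unfolding concave_on_iff by (metis image_subset_iff real_scaleR_def)
  ultimately show "u * g (f x) + v * g (f y) \<le> g (f (u *\<^sub>R x + v *\<^sub>R y))" by linarith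
qed

lemma convex_on_norm_diff_linear:
  assumes "linear L" "convex S"
  shows "convex_on S (\<lambda>x. norm (L x - d))"
  unfolding convex_on_def
proof (intro conjI ballI allI impI)
  fix x y assume "x \<in> S" "y \<in> S"
  fix u v :: real assume u: "0 \<le> u" and v: "0 \<le> v" and uv: "u + v = 1"
  have "L (u *\<^sub>R x + v *\<^sub>R y) - d = u *\<^sub>R (L x - d) + v *\<^sub>R (L y - d)"
    using uv linear_add[OF assms(1)] linear_scale[OF assms(1)]
    by (simp add: algebra_simps flip: scaleR_add_left)
  then show "norm (L (u *\<^sub>R x + v *\<^sub>R y) - d) \<le> u * norm (L x - d) + v * norm (L y - d)"
    using norm_triangle_ineq[of "u *\<^sub>R (L x - d)" "v *\<^sub>R (L y - d)"] u v by simp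
qed (rule assms(2))

text \<open>The SNR \<open>f\<^sub>j\<close> at a destination seen with source SNR \<open>a\<close>, from a relay of
  gain \<open>C = \<xi>\<^sub>r\<^sub>j P\<^sub>r\<close> at distance \<open>u\<close>, with \<open>t = \<rho>\<^sup>2\<close>.\<close>
definition coherent_snr :: "real \<Rightarrow> real \<Rightarrow> real \<Rightarrow> real \<Rightarrow> real \<Rightarrow> real" where
  "coherent_snr a C alpha t u = a + C / u powr alpha + 2 * sqrt t * sqrt (a * (C / u powr alpha))"

text \<open>Solving the quadratic \<open>c = a + x\<^sup>2 + 2 \<surd>(t a) x\<close> for \<open>x = \<surd>C / u\<^bsup>\<alpha>/2\<^esup>\<close> gives
  the largest distance at which the coherent SNR still reaches level \<open>c > a\<close>.\<close>
definition snr_radius :: "real \<Rightarrow> real \<Rightarrow> real \<Rightarrow> real \<Rightarrow> real \<Rightarrow> real" where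
  "snr_radius a C alpha c t =
     (sqrt C * (sqrt (c - a + a * t) + sqrt (a * t)) / (c - a)) powr (2 / alpha)"

lemma coherent_snr_ge_base:
  assumes "0 \<le> a" "0 \<le> C" "0 \<le> t"
  shows "a \<le> coherent_snr a C alpha t u"
  using assms by (simp add: coherent_snr_def)

lemma coherent_snr_ge_iff:
  assumes a: "0 \<le> a" and C: "0 < C" and alpha: "0 < alpha" and t: "0 \<le> t" and u: "0 < u"
    and ac: "a < c"
  shows "c \<le> coherent_snr a C alpha t u \<longleftrightarrow> u \<le> snr_radius a C alpha c t"
proof -
  define K where "K = c - a"
  define g where "g = alpha / 2"
  define x where "x = sqrt C / u powr g"
  define S where "S = sqrt (a * t)"
  define R where "R = sqrt (K + a * t)"
  have K: "0 < K" using ac by (simp add: K_def)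
  have ug: "0 < u powr g" using u by simp
  have x: "0 < x" using C ug by (simp add: x_def)
  have S: "0 \<le> S" using a t by (simp add: S_def)
  have R: "0 < R" using a t K by (simp add: R_def add_pos_nonneg)
  have RS: "R\<^sup>2 = K + S\<^sup>2" using a t K by (simp add: R_def S_def)
  have "u powr alpha = (u powr g)\<^sup>2"
    by (simp add: g_def power2_eq_square flip: powr_add)
  then have Cu: "C / u powr alpha = x\<^sup>2"
    using C by (simp add: x_def power_divide)
  have "coherent_snr a C alpha t u = a + x\<^sup>2 + 2 * S * x"
    using x by (simp add: coherent_snr_def Cu S_def real_sqrt_mult)
  then have "c \<le> coherent_snr a C alpha t u \<longleftrightarrow> R\<^sup>2 \<le> (x + S)\<^sup>2"
    unfolding RS K_def by (simp add: power2_eq_square algebra_simps)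
  also have "\<dots> \<longleftrightarrow> R - S \<le> x"
    using R x S by (auto simp: power2_le_iff_abs_le)
  also have "\<dots> \<longleftrightarrow> K \<le> x * (R + S)"
  proof -
    have "K = (R - S) * (R + S)" using RS by (simp add: power2_eq_square algebra_simps)
    then show ?thesis using R S by (simp add: mult_le_cancel_right_pos)
  qed
  also have "\<dots> \<longleftrightarrow> u powr g \<le> sqrt C * (R + S) / K"
    using ug K by (simp add: x_def field_simps)
  also have "\<dots> \<longleftrightarrow> u \<le> (sqrt C * (R + S) / K) powr (1 / g)"
  proof -
    have "0 < g" using alpha by (simp add: g_def)
    then have mono: "y powr g \<le> z powr g \<longleftrightarrow> y \<le> z" if "0 \<le> y" "0 \<le> z" for y z
      using that by (meson linorder_not_le powr_less_mono2 powr_mono2 less_imp_le)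
    have "0 \<le> sqrt C * (R + S) / K" using R S K C by simp
    then have "sqrt C * (R + S) / K = ((sqrt C * (R + S) / K) powr (1 / g)) powr g"
      using \<open>0 < g\<close> R S K C by (simp add: powr_powr)
    then show ?thesis using mono[of u "(sqrt C * (R + S) / K) powr (1 / g)"] u by simp
  qed
  finally show ?thesis unfolding snr_radius_def g_def R_def S_def K_def by simp
qed

lemma concave_on_sqrt_affine:
  assumes "0 \<le> a" "0 \<le> b"
  shows "concave_on {0..} (\<lambda>t. sqrt (b + a * t))"
proof (rule concave_on_comp_mono[OF _ concave_on_sqrt])
  show "concave_on {0..} (\<lambda>t. b + a * t)"
    using assms by (intro concave_on_add concave_on_cmul) (auto simp: concave_on_ident concave_on_const)
  show "mono_on {0..} sqrt" by (simp add: mono_onI)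
  show "(\<lambda>t. b + a * t) ` {0..} \<subseteq> {0..}" using assms by auto
qed

lemma concave_on_snr_radius:
  assumes a: "0 \<le> a" and C: "0 < C" and alpha: "2 \<le> alpha" and ac: "a < c"
  shows "concave_on {0..} (snr_radius a C alpha c)"
proof -
  define P where "P t = sqrt C / (c - a) * (sqrt (c - a + a * t) + sqrt (0 + a * t))" for t
  have "concave_on {0..} P"
    unfolding P_def using C ac a by (intro concave_on_cmul concave_on_add concave_on_sqrt_affine) auto
  moreover have "concave_on {0<..} (\<lambda>x. x powr (2 / alpha))" "mono_on {0<..} (\<lambda>x. x powr (2 / alpha))"
    using alpha by (auto intro!: concave_on_powr mono_onI powr_mono2)
  moreover have "P ` {0..} \<subseteq> {0<..}"
    using C ac a by (auto simp: P_def intro!: divide_pos_pos mult_pos_pos add_pos_nonneg)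
  ultimately have "concave_on {0..} (\<lambda>t. P t powr (2 / alpha))"
    by (rule concave_on_comp_mono)
  moreover have "P t powr (2 / alpha) = snr_radius a C alpha c t" for t
    by (simp add: snr_radius_def P_def)
  ultimately show ?thesis by simp
qed

lemma coherent_snr_ge_convex_combination:
  assumes a: "0 \<le> a" and C: "0 < C" and alpha: "2 \<le> alpha"
    and t1: "0 \<le> t1" and t2: "0 \<le> t2" and l: "0 \<le> l" "l \<le> 1"
    and u: "0 < u" and u1: "0 \<le> u1" and u2: "0 \<le> u2" and u_le: "u \<le> l * u1 + (1 - l) * u2"
    and c1: "0 < u1 \<Longrightarrow> c \<le> coherent_snr a C alpha t1 u1"
    and c2: "0 < u2 \<Longrightarrow> c \<le> coherent_snr a C alpha t2 u2"
  shows "c \<le> coherent_snr a C alpha (l * t1 + (1 - l) * t2) u"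
proof (cases "a < c")
  case False
  have "0 \<le> l * t1 + (1 - l) * t2" using t1 t2 l by simp
  from coherent_snr_ge_base[OF a less_imp_le[OF C] this, of alpha u] False show ?thesis by linarith
next
  case ac: True
  let ?R = "snr_radius a C alpha c"
  have alpha_pos: "0 < alpha" using alpha by simp
  have radius: "ui \<le> ?R ti" if "0 \<le> ui" "0 \<le> ti" "0 < ui \<Longrightarrow> c \<le> coherent_snr a C alpha ti ui"
    for ui ti
  proof (cases "0 < ui")
    case True
    then show ?thesis using that coherent_snr_ge_iff[OF a C alpha_pos \<open>0 \<le> ti\<close> True ac] by simp
  next
    case False
    then show ?thesis using that by (simp add: snr_radius_def)
  qed
  note u_le
  also have "l * u1 + (1 - l) * u2 \<le> l * ?R t1 + (1 - l) * ?R t2"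
    using radius[OF u1 t1 c1] radius[OF u2 t2 c2] l by (intro add_mono mult_left_mono) auto
  also have "\<dots> \<le> ?R (l * t1 + (1 - l) * t2)"
    using concave_on_snr_radius[OF a C alpha ac] t1 t2 l by (simp add: concave_on_iff)
  finally show ?thesis
    using coherent_snr_ge_iff[OF a C alpha_pos _ u ac] t1 t2 l by simp
qed

lemma ereal_le_if_real_lower_bounds:
  fixes x y :: ereal
  assumes "\<And>c. ereal c \<le> x \<Longrightarrow> ereal c \<le> y"
  shows "x \<le> y"
proof (rule ccontr)
  assume "\<not> x \<le> y"
  then obtain c where "y < ereal c" "ereal c < x" using ereal_dense2 by (meson not_le)
  then show False using assms[of c] by (meson less_imp_le not_le)
qed

lemma quasiconcave_on_coherent_snr:
  fixes S :: "'b::real_vector set" and F :: "'b \<Rightarrow> ereal" and D T :: "'b \<Rightarrow> real"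
  assumes a: "0 \<le> a" and C: "0 < C" and alpha: "2 \<le> alpha"
    and S: "convex S" and D: "convex_on S D" "\<And>x. x \<in> S \<Longrightarrow> 0 \<le> D x"
    and T: "\<And>x y l. x \<in> S \<Longrightarrow> y \<in> S \<Longrightarrow> T (l *\<^sub>R x + (1 - l) *\<^sub>R y) = l * T x + (1 - l) * T y"
      "\<And>x. x \<in> S \<Longrightarrow> 0 \<le> T x"
    and F: "\<And>x. x \<in> S \<Longrightarrow> F x = (if D x = 0 then \<infinity> else ereal (coherent_snr a C alpha (T x) (D x)))"
  shows "quasiconcave_on S F"
  unfolding quasiconcave_on_def
proof (intro ballI)
  fix x y l assume x: "x \<in> S" and y: "y \<in> S" and l: "l \<in> {0..1::real}"
  define z where "z = l *\<^sub>R x + (1 - l) *\<^sub>R y"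
  have z: "z \<in> S" using convexD[OF S x y, of l "1 - l"] l by (simp add: z_def)
  have Tz: "T z = l * T x + (1 - l) * T y" unfolding z_def by (rule T(1)[OF x y])
  have Dz: "D z \<le> l * D x + (1 - l) * D y"
    using D(1) x y l by (simp add: convex_on_def z_def)
  show "min (F x) (F y) \<le> F z"
  proof (cases "D z = 0")
    case True
    then show ?thesis by (simp add: F[OF z])
  next
    case False
    have "ereal c \<le> F z" if "ereal c \<le> min (F x) (F y)" for c
    proof -
      have "0 < D x \<Longrightarrow> c \<le> coherent_snr a C alpha (T x) (D x)"
        using that by (simp add: F[OF x])
      moreover have "0 < D y \<Longrightarrow> c \<le> coherent_snr a C alpha (T y) (D y)"
        using that by (simp add: F[OF y])
      ultimately have "c \<le> coherent_snr a C alpha (l * T x + (1 - l) * T y) (D z)"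
        using False D(2)[OF z] D(2)[OF x] D(2)[OF y] T(2)[OF x] T(2)[OF y] l Dz
        by (intro coherent_snr_ge_convex_combination[OF a C alpha]) auto
      then show ?thesis using False by (simp add: F[OF z] Tz)
    qed
    then show ?thesis by (rule ereal_le_if_real_lower_bounds)
  qed
qed

lemma quasiconcave_on_subset: "quasiconcave_on S F \<Longrightarrow> T \<subseteq> S \<Longrightarrow> quasiconcave_on T F"
  unfolding quasiconcave_on_def by blast

lemma fj_eq_coherent_snr:
  fixes s d r :: "'a::euclidean_space"
  assumes "0 \<le> rho" "s \<noteq> d" "0 < xs" "0 < Ps" "0 < xr" "0 < Pr"
  shows "fj alpha Ps Pr xs xr s d rho r =
    (if norm (r - d) = 0 then \<infinity>
     else ereal (coherent_snr (xs * Ps / norm (s - d) powr alpha) (xr * Pr) alpha (rho\<^sup>2) (norm (r - d))))"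
proof (cases "r = d")
  case True
  then show ?thesis using assms by (simp add: fj_def snr_def esqrt_def)
next
  case False
  have "0 \<le> xr * Pr / norm (r - d) powr alpha" using assms by simp
  then show ?thesis using assms False by (simp add: fj_def snr_def esqrt_def coherent_snr_def)
qed

lemma gj_eq_coherent_snr:
  fixes s d r :: "'a::euclidean_space"
  assumes "0 \<le> rho" "rho < 1" "s \<noteq> d" "0 < xs" "0 < Ps" "0 < xsr"
  shows "gj alpha Ps xs xsr s d rho r =
    (if norm (r - s) = 0 then \<infinity>
     else ereal (coherent_snr ((1 - rho\<^sup>2) * (xs * Ps / norm (s - d) powr alpha))
                             ((1 - rho\<^sup>2) * (xsr * Ps)) alpha 0 (norm (r - s))))"
proof -
  have "rho\<^sup>2 < 1" using assms by (simp add: power_less_one_iff)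
  then show ?thesis
    using assms by (cases "r = s") (auto simp: gj_def snr_def coherent_snr_def norm_minus_commute algebra_simps)
qed

lemma quasiconcave_fj:
  fixes s d :: "'a::euclidean_space"
  assumes "2 \<le> alpha" "0 < Ps" "0 < Pr" "0 < xs" "0 < xr" "s \<noteq> d" "0 \<le> rho"
  shows "quasiconcave_on UNIV (fj alpha Ps Pr xs xr s d rho)"
  using assms
  by (intro quasiconcave_on_coherent_snr[where D = "\<lambda>r. norm (r - d)" and T = "\<lambda>_. rho\<^sup>2"]
        convex_on_norm_diff_linear[OF linear_id[unfolded id_def]])
     (auto simp: fj_eq_coherent_snr algebra_simps)

lemma quasiconcave_fj_sqrt:
  fixes s d :: "'a::euclidean_space"
  assumes "2 \<le> alpha" "0 < Ps" "0 < Pr" "0 < xs" "0 < xr" "s \<noteq> d"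
  shows "quasiconcave_on ({0..} \<times> UNIV) (\<lambda>(t, r). fj alpha Ps Pr xs xr s d (sqrt t) r)"
  using assms
  by (intro quasiconcave_on_coherent_snr[where a = "xs * Ps / norm (s - d) powr alpha" and C = "xr * Pr"
          and D = "\<lambda>p. norm (snd p - d)" and T = fst]
        convex_on_norm_diff_linear[OF linear_snd] convex_Times)
     (auto simp: fj_eq_coherent_snr)

lemma quasiconcave_gj:
  fixes s d :: "'a::euclidean_space"
  assumes "2 \<le> alpha" "0 < Ps" "0 < xs" "0 < xsr" "s \<noteq> d" "0 \<le> rho" "rho \<le> 1"
  shows "quasiconcave_on UNIV (gj alpha Ps xs xsr s d rho)"
proof (cases "rho = 1")
  case True
  then show ?thesis by (simp add: quasiconcave_on_def gj_def zero_ereal_def[symmetric])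
next
  case False
  then have "rho < 1" "0 < 1 - rho\<^sup>2" using assms by (simp_all add: power_less_one_iff)
  then show ?thesis
    using assms
    by (intro quasiconcave_on_coherent_snr[where D = "\<lambda>r. norm (r - s)" and T = "\<lambda>_. 0"]
          convex_on_norm_diff_linear[OF linear_id[unfolded id_def]])
       (auto simp: gj_eq_coherent_snr)
qed

theorem lemma3:
  fixes N :: nat and alpha Ps Pr xi_sr :: real
    and xi_sj xi_rj :: "nat \<Rightarrow> real"
    and s :: "'a::euclidean_space" and dst :: "nat \<Rightarrow> 'a"
  assumes "N \<ge> 1" and "alpha \<ge> 2" and "Ps > 0" and "Pr > 0" and "xi_sr > 0"
    and "\<forall>j\<in>{1..N}. xi_sj j > 0 \<and> xi_rj j > 0"
    and "\<forall>j\<in>{1..N}. s \<noteq> dst j"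
  shows "\<forall>j\<in>{1..N}.
           (\<forall>rho\<in>{0..1::real}.
              quasiconcave_on UNIV (\<lambda>r. fj alpha Ps Pr (xi_sj j) (xi_rj j) s (dst j) rho r)
            \<and> quasiconcave_on UNIV (\<lambda>r. gj alpha Ps (xi_sj j) xi_sr s (dst j) rho r))
         \<and> quasiconcave_on ({0..1::real} \<times> (UNIV :: 'a set))
              (\<lambda>(t, r). fj alpha Ps Pr (xi_sj j) (xi_rj j) s (dst j) (sqrt t) r)"
proof
  fix j assume "j \<in> {1..N}"
  then have j: "0 < xi_sj j" "0 < xi_rj j" "s \<noteq> dst j" using assms(6,7) by auto
  have "quasiconcave_on ({0..} \<times> UNIV)
      (\<lambda>(t, r). fj alpha Ps Pr (xi_sj j) (xi_rj j) s (dst j) (sqrt t) r)"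
    by (rule quasiconcave_fj_sqrt[OF assms(2-4) j])
  then have "quasiconcave_on ({0..1} \<times> UNIV)
      (\<lambda>(t, r). fj alpha Ps Pr (xi_sj j) (xi_rj j) s (dst j) (sqrt t) r)"
    by (rule quasiconcave_on_subset) auto
  then show "(\<forall>rho\<in>{0..1}.
              quasiconcave_on UNIV (\<lambda>r. fj alpha Ps Pr (xi_sj j) (xi_rj j) s (dst j) rho r)
            \<and> quasiconcave_on UNIV (\<lambda>r. gj alpha Ps (xi_sj j) xi_sr s (dst j) rho r))
         \<and> quasiconcave_on ({0..1} \<times> UNIV)
              (\<lambda>(t, r). fj alpha Ps Pr (xi_sj j) (xi_rj j) s (dst j) (sqrt t) r)"
    using quasiconcave_fj[OF assms(2-4) j] quasiconcave_gj[OF assms(2,3) j(1) assms(5) j(3)] by simp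
qed

end
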